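(* Let $S$, $S'$ and $R$ be finite sequences of propositional formulae. If $S \equiv S'$ then $S \cdot R \equiv S' \cdot R$.
   Context: Models are truth assignments. For a formula $G$: $I \leq_G J$ iff $I \models G$ or $J \not\models G$. For a sequence $S=[S_1,\ldots,S_m]$: $I \leq_S J$ iff either $S=[]$, or ($I \leq_{S_1} J$ and (either $J \not\leq_{S_1} I$ or $I \leq_{R'} J$)), where $R'=[S_2,\ldots,S_m]$. For sequences, $S\equiv R$ means $I \leq_S J$ and $I\leq_R J$ coincide for all pairs of models $I,J$. $S\cdot R$ denotes concatenation of sequences. *)

theory Defs
  imports Main
begin

datatype 'a form =
    Atom 'a
  | Bot
  | Neg "'a form"
  | Conj "'a form" "'a form"
  | Disj "'a form" "'a form"
  | Imp "'a form" "'a form"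

type_synonym 'a model = "'a \<Rightarrow> bool"

fun sat :: "'a model \<Rightarrow> 'a form \<Rightarrow> bool" where
  "sat I (Atom p) = I p"
| "sat I Bot = False"
| "sat I (Neg F) = (\<not> sat I F)"
| "sat I (Conj F G) = (sat I F \<and> sat I G)"
| "sat I (Disj F G) = (sat I F \<or> sat I G)"
| "sat I (Imp F G) = (sat I F \<longrightarrow> sat I G)"

definition form_le :: "'a form \<Rightarrow> 'a model \<Rightarrow> 'a model \<Rightarrow> bool" where
  "form_le G I J \<longleftrightarrow> sat I G \<or> \<not> sat J G"

fun seq_le :: "'a form list \<Rightarrow> 'a model \<Rightarrow> 'a model \<Rightarrow> bool" where
  "seq_le [] I J = True"
| "seq_le (S1 # R') I J =
     (form_le S1 I J \<and> (\<not> form_le S1 J I \<or> seq_le R' I J))"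

definition seq_equiv :: "'a form list \<Rightarrow> 'a form list \<Rightarrow> bool" where
  "seq_equiv S R \<longleftrightarrow> (\<forall>I J. seq_le S I J = seq_le R I J)"

end

theory Submission
  imports Defs
begin

lemma form_le_total: "form_le G I J \<or> form_le G J I"
  by (auto simp: form_le_def)

text \<open>Totality of each \<open>\<le>\<^sub>G\<close> is what lets the strictness test of the
  prefix absorb the strictness tests of its individual formulae.\<close>
lemma seq_le_append:
  "seq_le (S @ R) I J \<longleftrightarrow> seq_le S I J \<and> (\<not> seq_le S J I \<or> seq_le R I J)"
proof (induction S)
  case Nil
  then show ?case by simp
next
  case (Cons G S)
  then show ?case using form_le_total [of G I J] by auto
qed

theorem theorem7:
  fixes S S' R :: "'a form list"
  assumes "seq_equiv S S'"
  shows "seq_equiv (S @ R) (S' @ R)"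
  using assms by (simp add: seq_equiv_def seq_le_append)

end
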